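(* Let $S\subseteq\mathbb{R}^m$ be a semialgebraic set. Then there exist $\mathcal N\in ISDnet(m,n,1)$ and $C\in\mathbb{N}$ such that for every $c\ge C$ and every $x\in\mathbb{R}^m$, $\mathrm{ODESolve}(\mathcal N,c,x,(0,0,0),1) = (0,\chi_S(x))$, where $0\in\mathbb{R}^n$ and $\chi_S$ is the characteristic function of $S$ ($\chi_S(x)=1$ if $x\in S$, $0$ otherwise).
   Context: $ISD(D)$ is the smallest set of functions $D\to\mathbb{R}$ containing all restrictions of real polynomials and closed under pointwise $\min$, $\max$; vector/matrix maps are ISD if all entries are. $ISDnet(m,n,1) := ISD(\mathbb{R}^m\times\mathbb{R}^{n+1}\times\mathbb{R},\ \mathbb{R}^{(n+1)\times(n+1)}\times\mathbb{R}^{n+1})$; for $\mathcal N$ in it write $\mathcal N(x,y,t,s)=(M(x,y,t,s),b(x,y,t,s))$. $\mathrm{clamp\text{-}sol}_c(M,b):=\mathrm{clamp}(M^{-1}b,-c,c)$ (componentwise $a_i\mapsto\min(\max(a_i,-c),c)$) if $M$ is invertible, and $0$ otherwise. $\mathrm{ODESolve}(\mathcal N,c,x,(y_0,t_0,s_0),s_{\mathrm{final}})$ denotes $(y(s_{\mathrm{final}}),t(s_{\mathrm{final}}))$ where $(y,t)$ is the exact solution of $\frac{d}{ds}(y,t)=\mathrm{clamp\text{-}sol}_c\big(M(x,y,t,s),b(x,y,t,s)\big)$ with $(y,t)(s_0)=(y_0,t_0)$. A semialgebraic set is a finite union of sets defined by finitely many polynomial equations and strict polynomial inequalities. *)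

theory Defs
  imports Complex_Main "Jordan_Normal_Form.Matrix"
begin

inductive_set polys_on :: "('a \<Rightarrow> real) set \<Rightarrow> ('a \<Rightarrow> real) set" for V where
  const: "(\<lambda>z. c) \<in> polys_on V"
| var: "f \<in> V \<Longrightarrow> f \<in> polys_on V"
| add: "f \<in> polys_on V \<Longrightarrow> g \<in> polys_on V \<Longrightarrow> (\<lambda>z. f z + g z) \<in> polys_on V"
| mult: "f \<in> polys_on V \<Longrightarrow> g \<in> polys_on V \<Longrightarrow> (\<lambda>z. f z * g z) \<in> polys_on V"

inductive_set ISD_on :: "('a \<Rightarrow> real) set \<Rightarrow> ('a \<Rightarrow> real) set" for V where
  poly: "f \<in> polys_on V \<Longrightarrow> f \<in> ISD_on V"
| min: "f \<in> ISD_on V \<Longrightarrow> g \<in> ISD_on V \<Longrightarrow> (\<lambda>z. min (f z) (g z)) \<in> ISD_on V"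
| max: "f \<in> ISD_on V \<Longrightarrow> g \<in> ISD_on V \<Longrightarrow> (\<lambda>z. max (f z) (g z)) \<in> ISD_on V"

definition polys :: "nat \<Rightarrow> (real vec \<Rightarrow> real) set" where
  "polys m = polys_on {(\<lambda>x. x $ i) | i. i < m}"

definition semialgebraic :: "nat \<Rightarrow> real vec set \<Rightarrow> bool" where
  "semialgebraic m S \<longleftrightarrow>
     (\<exists>F :: ((real vec \<Rightarrow> real) set \<times> (real vec \<Rightarrow> real) set) set.
        finite F \<and>
        (\<forall>(P, Q) \<in> F. finite P \<and> finite Q \<and> P \<subseteq> polys m \<and> Q \<subseteq> polys m) \<and>
        S = (\<Union>(P, Q) \<in> F. {x \<in> carrier_vec m. (\<forall>p\<in>P. p x = 0) \<and> (\<forall>q\<in>Q. q x > 0)}))"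

text \<open>Inputs of an ISD-net in ISDnet(m,n,1): (x, z, s) with x in R^m,
  z = (y,t) in R^(n+1) (t is the last coordinate z $ n), s in R.\<close>
type_synonym net_input = "real vec \<times> real vec \<times> real"

definition net_vars :: "nat \<Rightarrow> nat \<Rightarrow> (net_input \<Rightarrow> real) set" where
  "net_vars m n = {(\<lambda>(x, z, s). x $ i) | i. i < m} \<union> {(\<lambda>(x, z, s). z $ j) | j. j < n + 1}
                   \<union> {(\<lambda>(x, z, s). s)}"

text \<open>A network is given by the entry functions of M (an (n+1)x(n+1) matrix) and b
  (a vector in R^(n+1)).\<close>
type_synonym isdnet = "(nat \<Rightarrow> nat \<Rightarrow> (net_input \<Rightarrow> real)) \<times> (nat \<Rightarrow> (net_input \<Rightarrow> real))"

definition is_ISDnet :: "nat \<Rightarrow> nat \<Rightarrow> isdnet \<Rightarrow> bool" where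
  "is_ISDnet m n N \<longleftrightarrow>
     (\<forall>i < n + 1. \<forall>j < n + 1. fst N i j \<in> ISD_on (net_vars m n)) \<and>
     (\<forall>i < n + 1. snd N i \<in> ISD_on (net_vars m n))"

definition net_M :: "nat \<Rightarrow> isdnet \<Rightarrow> real vec \<Rightarrow> real vec \<Rightarrow> real \<Rightarrow> real mat" where
  "net_M n N x z s = mat (n + 1) (n + 1) (\<lambda>(i, j). fst N i j (x, z, s))"

definition net_b :: "nat \<Rightarrow> isdnet \<Rightarrow> real vec \<Rightarrow> real vec \<Rightarrow> real \<Rightarrow> real vec" where
  "net_b n N x z s = vec (n + 1) (\<lambda>i. snd N i (x, z, s))"

definition clamp :: "real \<Rightarrow> real \<Rightarrow> real" where
  "clamp c a = min (max a (- c)) c"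

definition clamp_sol :: "real \<Rightarrow> real mat \<Rightarrow> real vec \<Rightarrow> real vec" where
  "clamp_sol c M b =
     (if invertible_mat M
      then vec (dim_vec b) (\<lambda>i. clamp c ((THE v. v \<in> carrier_vec (dim_col M) \<and> M *\<^sub>v v = b) $ i))
      else 0\<^sub>v (dim_vec b))"

definition ode_solution ::
  "nat \<Rightarrow> isdnet \<Rightarrow> real \<Rightarrow> real vec \<Rightarrow> real vec \<Rightarrow> real \<Rightarrow> real \<Rightarrow> (real \<Rightarrow> real vec) \<Rightarrow> bool" where
  "ode_solution n N c x z0 s0 s1 sol \<longleftrightarrow>
     sol s0 = z0 \<and>
     (\<forall>s \<in> {s0..s1}. sol s \<in> carrier_vec (n + 1) \<and>
        (\<forall>i < n + 1. ((\<lambda>r. sol r $ i) has_real_derivative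
            (clamp_sol c (net_M n N x (sol s) s) (net_b n N x (sol s) s) $ i)) (at s within {s0..s1})))"

end

theory Submission
  imports Defs
begin

(* A semialgebraic indicator is a finite sum of steps a_k [G_k x > 0] with ISD functions G_k:
   [p = 0] = 1 - [p^2 > 0], and products of steps are steps since [min u v > 0] = [u > 0] [v > 0].
   The network (n = 1) carries a register r next to the output t and devotes the k-th of K equal time
   slots to the k-th step. With M = [[1, 0], [-Q, P]] and b = (Phi, 0) the velocity is (Phi, Q Phi / P),
   where Phi pushes r up by a bump in the first half of the slot and back down in the second half,
   P = min (max (G_k x) 0) (up + down) and Q = min (max (G_k x) 0) up. If G_k x <= 0, M is singular and
   nothing moves; otherwise Q / P is 1 while r rises and 0 while it falls, so t gains exactly a_k and r
   returns to 0. The velocity is bounded and does not depend on the state, so for large c the clamp is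
   inactive and the unique solution is the explicit primitive. *)

section \<open>Closure properties of ISD functions\<close>

lemma polys_on_diff: "f \<in> polys_on V \<Longrightarrow> g \<in> polys_on V \<Longrightarrow> (\<lambda>z. f z - g z) \<in> polys_on V"
  using polys_on.add[of f V "\<lambda>z. - 1 * g z"] polys_on.mult[OF polys_on.const, of g V "- 1"] by simp

lemma ISD_on_const: "(\<lambda>z. c) \<in> ISD_on V"
  by (intro ISD_on.poly polys_on.const)

lemma ISD_on_uminus: "f \<in> ISD_on V \<Longrightarrow> (\<lambda>z. - f z) \<in> ISD_on V"
proof (induction rule: ISD_on.induct)
  case (poly f)
  then show ?case
    using ISD_on.poly[OF polys_on.mult[OF polys_on.const, of f V "- 1"]] by simp
next
  case (min f g)
  then show ?case using ISD_on.max[OF min.IH] by (simp add: minus_min_eq_max)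
next
  case (max f g)
  then show ?case using ISD_on.min[OF max.IH] by (simp add: minus_max_eq_min)
qed

lemma ISD_on_add_poly: "f \<in> ISD_on V \<Longrightarrow> p \<in> polys_on V \<Longrightarrow> (\<lambda>z. p z + f z) \<in> ISD_on V"
proof (induction rule: ISD_on.induct)
  case (poly f)
  then show ?case by (intro ISD_on.poly polys_on.add)
next
  case (min f g)
  then show ?case using ISD_on.min[OF min.IH] by (simp add: min_add_distrib_right)
next
  case (max f g)
  then show ?case using ISD_on.max[OF max.IH] by (simp add: max_add_distrib_right)
qed

lemma ISD_on_add: "f \<in> ISD_on V \<Longrightarrow> g \<in> ISD_on V \<Longrightarrow> (\<lambda>z. f z + g z) \<in> ISD_on V"
proof (induction arbitrary: g rule: ISD_on.induct)
  case (poly f)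
  then show ?case using ISD_on_add_poly by blast
next
  case (min f1 f2)
  then show ?case using ISD_on.min[OF min.IH[OF min.prems]] by (simp add: min_add_distrib_left)
next
  case (max f1 f2)
  then show ?case using ISD_on.max[OF max.IH[OF max.prems]] by (simp add: max_add_distrib_left)
qed

lemma ISD_on_diff: "f \<in> ISD_on V \<Longrightarrow> g \<in> ISD_on V \<Longrightarrow> (\<lambda>z. f z - g z) \<in> ISD_on V"
  using ISD_on_add[OF _ ISD_on_uminus, of f V g] by simp

lemma ISD_on_cmult_nonneg: "f \<in> ISD_on V \<Longrightarrow> (c::real) \<ge> 0 \<Longrightarrow> (\<lambda>z. c * f z) \<in> ISD_on V"
proof (induction rule: ISD_on.induct)
  case (poly f)
  then show ?case by (intro ISD_on.poly polys_on.mult polys_on.const)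
next
  case (min f g)
  then show ?case using ISD_on.min[OF min.IH] by (simp add: min_mult_distrib_left)
next
  case (max f g)
  then show ?case using ISD_on.max[OF max.IH] by (simp add: max_mult_distrib_left)
qed

lemma ISD_on_cmult: "f \<in> ISD_on V \<Longrightarrow> (\<lambda>z. (c::real) * f z) \<in> ISD_on V"
  using ISD_on_cmult_nonneg[of f V c] ISD_on_uminus[OF ISD_on_cmult_nonneg, of f V "- c"]
  by (cases "c \<ge> 0") simp_all

lemma ISD_on_sum: "(\<And>k. k < (K::nat) \<Longrightarrow> f k \<in> ISD_on V) \<Longrightarrow> (\<lambda>z. \<Sum>k<K. f k z) \<in> ISD_on V"
  by (induction K) (simp_all add: ISD_on_const ISD_on_add)

lemma polys_on_compose:
  assumes "\<And>v. v \<in> V \<Longrightarrow> (\<lambda>w. v (\<pi> w)) \<in> polys_on W"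
  shows "f \<in> polys_on V \<Longrightarrow> (\<lambda>w. f (\<pi> w)) \<in> polys_on W"
  by (induction rule: polys_on.induct) (auto intro: assms polys_on.intros)

lemma ISD_on_compose:
  assumes "\<And>v. v \<in> V \<Longrightarrow> (\<lambda>w. v (\<pi> w)) \<in> polys_on W"
  shows "f \<in> ISD_on V \<Longrightarrow> (\<lambda>w. f (\<pi> w)) \<in> ISD_on W"
  by (induction rule: ISD_on.induct) (auto intro: ISD_on.intros polys_on_compose[OF assms])

section \<open>Semialgebraic indicators as sums of steps\<close>

definition ISD :: "nat \<Rightarrow> (real vec \<Rightarrow> real) set" where
  "ISD m = ISD_on {(\<lambda>x. x $ i) | i. i < m}"

lemma polys_subset_ISD: "polys m \<subseteq> ISD m"
  unfolding polys_def ISD_def by (auto intro: ISD_on.poly)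

definition step_sum :: "(real \<times> (real vec \<Rightarrow> real)) list \<Rightarrow> real vec \<Rightarrow> real" where
  "step_sum cs x = (\<Sum>(a, G)\<leftarrow>cs. a * of_bool (G x > 0))"

lemma step_sum_conv_sum:
  "step_sum cs x = (\<Sum>k<length cs. if snd (cs ! k) x > 0 then fst (cs ! k) else 0)"
  unfolding step_sum_def sum_list_sum_nth atLeast0LessThan by (intro sum.cong) (auto simp: split_beta)

definition ISD_step_sums :: "nat \<Rightarrow> (real vec \<Rightarrow> real) set" where
  "ISD_step_sums m = {step_sum cs | cs. snd ` set cs \<subseteq> ISD m}"

lemma ISD_step_sums_const: "(\<lambda>x. a) \<in> ISD_step_sums m"
  unfolding ISD_step_sums_def ISD_def
  by (intro CollectI exI[of _ "[(a, \<lambda>x. 1)]"]) (auto simp: step_sum_def ISD_on_const)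

lemma ISD_step_sums_step: "G \<in> ISD m \<Longrightarrow> (\<lambda>x. of_bool (G x > 0)) \<in> ISD_step_sums m"
  unfolding ISD_step_sums_def by (intro CollectI exI[of _ "[(1, G)]"]) (auto simp: step_sum_def)

lemma ISD_step_sums_add:
  assumes "f \<in> ISD_step_sums m" "g \<in> ISD_step_sums m"
  shows "(\<lambda>x. f x + g x) \<in> ISD_step_sums m"
proof -
  obtain cs ds where "snd ` set cs \<subseteq> ISD m" "snd ` set ds \<subseteq> ISD m" "f = step_sum cs" "g = step_sum ds"
    using assms unfolding ISD_step_sums_def by blast
  then show ?thesis
    unfolding ISD_step_sums_def by (intro CollectI exI[of _ "cs @ ds"]) (auto simp: step_sum_def)
qed

lemma ISD_step_sums_cmult:
  assumes "f \<in> ISD_step_sums m"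
  shows "(\<lambda>x. c * f x) \<in> ISD_step_sums m"
proof -
  obtain cs where "snd ` set cs \<subseteq> ISD m" "f = step_sum cs"
    using assms unfolding ISD_step_sums_def by blast
  moreover have "c * step_sum cs x = step_sum [(c * a, G). (a, G) \<leftarrow> cs] x" for x
    by (induction cs) (auto simp: step_sum_def algebra_simps)
  ultimately show ?thesis
    unfolding ISD_step_sums_def by (intro CollectI exI[of _ "[(c * a, G). (a, G) \<leftarrow> cs]"]) auto
qed

lemma step_sum_mult:
  "step_sum cs x * step_sum ds x = step_sum [(a * b, \<lambda>y. min (G y) (H y)). (a, G) \<leftarrow> cs, (b, H) \<leftarrow> ds] x"
proof (induction cs)
  case (Cons p cs)
  obtain a G where p: "p = (a, G)" by fastforce
  have "a * of_bool (G x > 0) * step_sum ds x = step_sum [(a * b, \<lambda>y. min (G y) (H y)). (b, H) \<leftarrow> ds] x"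
    by (induction ds) (auto simp: step_sum_def algebra_simps)
  then show ?case using Cons by (simp add: p step_sum_def distrib_right)
qed (simp add: step_sum_def)

lemma ISD_step_sums_mult:
  assumes "f \<in> ISD_step_sums m" "g \<in> ISD_step_sums m"
  shows "(\<lambda>x. f x * g x) \<in> ISD_step_sums m"
proof -
  obtain cs ds where cs: "snd ` set cs \<subseteq> ISD m" "f = step_sum cs"
    and ds: "snd ` set ds \<subseteq> ISD m" "g = step_sum ds"
    using assms unfolding ISD_step_sums_def by blast
  have "snd ` set [(a * b, \<lambda>y. min (G y) (H y)). (a, G) \<leftarrow> cs, (b, H) \<leftarrow> ds] \<subseteq> ISD m"
    using cs(1) ds(1) unfolding ISD_def by (fastforce intro: ISD_on.min)
  then show ?thesis
    unfolding ISD_step_sums_def cs(2) ds(2) step_sum_mult by blast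
qed

lemma ISD_step_sums_prod:
  "finite A \<Longrightarrow> (\<And>i. i \<in> A \<Longrightarrow> f i \<in> ISD_step_sums m) \<Longrightarrow>
    (\<lambda>x. \<Prod>i\<in>A. f i x) \<in> ISD_step_sums m"
  by (induction A rule: finite_induct) (simp_all add: ISD_step_sums_const ISD_step_sums_mult)

lemma ISD_step_sums_one_minus: "f \<in> ISD_step_sums m \<Longrightarrow> (\<lambda>x. 1 - f x) \<in> ISD_step_sums m"
  using ISD_step_sums_add[OF ISD_step_sums_const ISD_step_sums_cmult, of f m 1 "- 1"] by simp

lemma prod_of_bool: "finite A \<Longrightarrow> (\<Prod>i\<in>A. of_bool (P i)) = (of_bool (\<forall>i\<in>A. P i) :: real)"
  by (induction A rule: finite_induct) auto

lemma prod_one_minus_of_bool: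
  "finite A \<Longrightarrow> (\<Prod>i\<in>A. 1 - of_bool (P i)) = (of_bool (\<forall>i\<in>A. \<not> P i) :: real)"
  by (induction A rule: finite_induct) auto

lemma basic_semialgebraic_indicator_ISD_step_sum:
  assumes "finite P" "finite Q" "P \<subseteq> polys m" "Q \<subseteq> polys m"
  shows "(\<lambda>x. of_bool ((\<forall>p\<in>P. p x = 0) \<and> (\<forall>q\<in>Q. q x > 0))) \<in> ISD_step_sums m"
proof -
  have "(\<lambda>x. (\<Prod>p\<in>P. 1 - of_bool (p x * p x > 0)) * (\<Prod>q\<in>Q. of_bool (q x > 0))) \<in> ISD_step_sums m"
  proof (intro ISD_step_sums_mult ISD_step_sums_prod ISD_step_sums_one_minus ISD_step_sums_step)
    show "(\<lambda>x. p x * p x) \<in> ISD m" if "p \<in> P" for p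
      using that assms(3) unfolding polys_def ISD_def by (blast intro: ISD_on.poly polys_on.mult)
    show "q \<in> ISD m" if "q \<in> Q" for q
      using that assms(4) polys_subset_ISD by blast
  qed (use assms in simp_all)
  then show ?thesis
    using assms(1,2) by (simp add: prod_one_minus_of_bool prod_of_bool of_bool_conj)
qed

lemma semialgebraic_indicator_ISD_step_sum:
  assumes "semialgebraic m S"
  obtains f where "f \<in> ISD_step_sums m" "\<And>x. x \<in> carrier_vec m \<Longrightarrow> (of_bool (x \<in> S) :: real) = f x"
proof -
  obtain F :: "((real vec \<Rightarrow> real) set \<times> (real vec \<Rightarrow> real) set) set" where
    F: "finite F" "\<forall>(P, Q) \<in> F. finite P \<and> finite Q \<and> P \<subseteq> polys m \<and> Q \<subseteq> polys m"
    and S: "S = (\<Union>(P, Q) \<in> F. {x \<in> carrier_vec m. (\<forall>p\<in>P. p x = 0) \<and> (\<forall>q\<in>Q. q x > 0)})"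
    using assms unfolding semialgebraic_def by blast
  define holds :: "(real vec \<Rightarrow> real) set \<times> (real vec \<Rightarrow> real) set \<Rightarrow> real vec \<Rightarrow> bool"
    where "holds PQ x \<longleftrightarrow> (\<forall>p\<in>fst PQ. p x = 0) \<and> (\<forall>q\<in>snd PQ. q x > 0)" for PQ x
  have "(\<lambda>x. 1 - (\<Prod>PQ\<in>F. 1 - of_bool (holds PQ x))) \<in> ISD_step_sums m"
  proof (intro ISD_step_sums_one_minus ISD_step_sums_prod F(1))
    fix PQ assume "PQ \<in> F"
    then show "(\<lambda>x. of_bool (holds PQ x)) \<in> ISD_step_sums m"
      using F(2) basic_semialgebraic_indicator_ISD_step_sum unfolding holds_def by (cases PQ) auto
  qed
  moreover have "(of_bool (x \<in> S) :: real) = 1 - (\<Prod>PQ\<in>F. 1 - of_bool (holds PQ x))" if "x \<in> carrier_vec m" for x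
  proof -
    have "x \<in> S \<longleftrightarrow> (\<exists>PQ\<in>F. holds PQ x)"
      using that unfolding S holds_def by (auto simp: split_beta)
    then show ?thesis
      unfolding prod_one_minus_of_bool[OF F(1)] by simp
  qed
  ultimately show ?thesis using that by blast
qed

section \<open>The bump and its primitive\<close>

definition bump :: "real \<Rightarrow> real" where
  "bump \<sigma> = max 0 (\<sigma> * (1 - \<sigma>))"

definition bump_primitive :: "real \<Rightarrow> real" where
  "bump_primitive \<sigma> = (if \<sigma> \<le> 0 then 0 else if \<sigma> \<le> 1 then \<sigma>^2/2 - \<sigma>^3/3 else 1/6)"

lemma bump_nonneg: "bump \<sigma> \<ge> 0"
  by (simp add: bump_def)

lemma bump_le_quarter: "bump \<sigma> \<le> 1/4"
proof -
  have "0 \<le> (\<sigma> - 1/2)^2"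
    by simp
  then have "\<sigma> * (1 - \<sigma>) \<le> 1/4"
    by (simp add: power2_eq_square algebra_simps)
  then show ?thesis
    by (simp add: bump_def)
qed

lemma bump_pos_iff: "bump \<sigma> > 0 \<longleftrightarrow> 0 < \<sigma> \<and> \<sigma> < 1"
  by (auto simp: bump_def zero_less_mult_iff less_max_iff_disj)

lemma bump_eq_0_iff: "bump \<sigma> = 0 \<longleftrightarrow> \<sigma> \<le> 0 \<or> 1 \<le> \<sigma>"
  using bump_nonneg[of \<sigma>] bump_pos_iff[of \<sigma>] by auto

lemma ISD_on_bump: "p \<in> polys_on V \<Longrightarrow> (\<lambda>z. bump (p z)) \<in> ISD_on V"
  unfolding bump_def
  by (intro ISD_on.max ISD_on.poly polys_on.const polys_on.mult polys_on_diff)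

lemma has_real_derivative_from_left_right:
  fixes f :: "real \<Rightarrow> real"
  assumes "(f has_real_derivative D) (at a within {..a})" "(f has_real_derivative D) (at a within {a..})"
  shows "(f has_real_derivative D) (at a)"
proof -
  have "(f has_real_derivative D) (at a within ({..a} \<union> {a..}))"
    using assms unfolding has_field_derivative_iff Lim_within_Un by simp
  moreover have "{..a} \<union> {a..} = (UNIV::real set)"
    by auto
  ultimately show ?thesis
    by simp
qed

lemma cubic_has_real_derivative:
  "((\<lambda>\<sigma>::real. \<sigma>^2/2 - \<sigma>^3/3) has_real_derivative \<sigma> * (1 - \<sigma>)) (at \<sigma> within S)"
  by (auto intro!: derivative_eq_intros simp: algebra_simps power2_eq_square)

lemma bump_primitive_nonpos: "\<sigma> \<le> 0 \<Longrightarrow> bump_primitive \<sigma> = 0"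
  by (simp add: bump_primitive_def)

lemma bump_primitive_ge_one: "\<sigma> \<ge> 1 \<Longrightarrow> bump_primitive \<sigma> = 1/6"
  by (auto simp: bump_primitive_def)

lemma bump_primitive_cubic: "0 \<le> \<sigma> \<Longrightarrow> \<sigma> \<le> 1 \<Longrightarrow> bump_primitive \<sigma> = \<sigma>^2/2 - \<sigma>^3/3"
  unfolding bump_primitive_def by (cases "\<sigma> = 0") auto

lemma bump_primitive_has_derivative_left:
  "(bump_primitive has_real_derivative bump \<sigma>) (at \<sigma> within {..\<sigma>})"
proof -
  consider "\<sigma> \<le> 0" | "0 < \<sigma>" "\<sigma> \<le> 1" | "1 < \<sigma>"
    by linarith
  then show ?thesis
  proof cases
    case 1
    have "bump \<sigma> = 0"
      using 1 by (simp add: bump_eq_0_iff)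
    then have "((\<lambda>_. 0) has_real_derivative bump \<sigma>) (at \<sigma> within {..\<sigma>})"
      by simp
    then show ?thesis
      by (rule has_field_derivative_transform_within[where d=1]) (use 1 in \<open>auto simp: bump_primitive_nonpos\<close>)
  next
    case 2
    have "((\<lambda>\<sigma>. \<sigma>^2/2 - \<sigma>^3/3) has_real_derivative bump \<sigma>) (at \<sigma> within {..\<sigma>})"
      using 2 cubic_has_real_derivative by (simp add: bump_def)
    then show ?thesis
      by (rule has_field_derivative_transform_within[where d=\<sigma>])
         (use 2 in \<open>auto simp: bump_primitive_cubic dist_real_def\<close>)
  next
    case 3
    have "bump \<sigma> = 0"
      using 3 by (simp add: bump_eq_0_iff)
    then have "((\<lambda>_. 1/6) has_real_derivative bump \<sigma>) (at \<sigma> within {..\<sigma>})"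
      by simp
    then show ?thesis
      by (rule has_field_derivative_transform_within[where d="\<sigma> - 1"])
         (use 3 in \<open>auto simp: bump_primitive_def dist_real_def\<close>)
  qed
qed

lemma bump_primitive_has_derivative_right:
  "(bump_primitive has_real_derivative bump \<sigma>) (at \<sigma> within {\<sigma>..})"
proof -
  consider "\<sigma> < 0" | "0 \<le> \<sigma>" "\<sigma> < 1" | "1 \<le> \<sigma>"
    by linarith
  then show ?thesis
  proof cases
    case 1
    have "bump \<sigma> = 0"
      using 1 by (simp add: bump_eq_0_iff)
    then have "((\<lambda>_. 0) has_real_derivative bump \<sigma>) (at \<sigma> within {\<sigma>..})"
      by simp
    then show ?thesis
      by (rule has_field_derivative_transform_within[where d="- \<sigma>"])
         (use 1 in \<open>auto simp: bump_primitive_def dist_real_def\<close>)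
  next
    case 2
    have "((\<lambda>\<sigma>. \<sigma>^2/2 - \<sigma>^3/3) has_real_derivative bump \<sigma>) (at \<sigma> within {\<sigma>..})"
      using 2 cubic_has_real_derivative by (simp add: bump_def)
    then show ?thesis
      by (rule has_field_derivative_transform_within[where d="1 - \<sigma>"])
         (use 2 in \<open>auto simp: bump_primitive_cubic dist_real_def\<close>)
  next
    case 3
    have "bump \<sigma> = 0"
      using 3 by (simp add: bump_eq_0_iff)
    then have "((\<lambda>_. 1/6) has_real_derivative bump \<sigma>) (at \<sigma> within {\<sigma>..})"
      by simp
    then show ?thesis
      by (rule has_field_derivative_transform_within[where d=1]) (use 3 in \<open>auto simp: bump_primitive_ge_one\<close>)
  qed
qed

lemma bump_primitive_has_real_derivative: "(bump_primitive has_real_derivative bump \<sigma>) (at \<sigma>)"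
  by (rule has_real_derivative_from_left_right[OF bump_primitive_has_derivative_left bump_primitive_has_derivative_right])

section \<open>The slot network\<close>

definition up_bump :: "nat \<Rightarrow> nat \<Rightarrow> real \<Rightarrow> real" where
  "up_bump K k s = bump (2 * real K * s - 2 * real k)"

definition down_bump :: "nat \<Rightarrow> nat \<Rightarrow> real \<Rightarrow> real" where
  "down_bump K k s = bump (2 * real K * s - (2 * real k + 1))"

lemma slot_support:
  assumes "up_bump K k s + down_bump K k s > 0"
  shows "real k < real K * s" "real K * s < real k + 1"
proof -
  have "up_bump K k s > 0 \<or> down_bump K k s > 0"
    using assms bump_nonneg unfolding up_bump_def down_bump_def by (smt (verit))
  then show "real k < real K * s" "real K * s < real k + 1"
    by (auto simp: up_bump_def down_bump_def bump_pos_iff)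
qed

lemma slots_disjoint:
  assumes "up_bump K k s + down_bump K k s > 0" "up_bump K j s + down_bump K j s > 0"
  shows "k = j"
proof -
  have "real k < real (Suc j)" "real j < real (Suc k)"
    using slot_support[OF assms(1)] slot_support[OF assms(2)] by simp_all
  then show ?thesis
    by simp
qed

lemma up_bump_pos_imp_down_bump_zero: "up_bump K k s > 0 \<Longrightarrow> down_bump K k s = 0"
  by (simp add: up_bump_def down_bump_def bump_pos_iff bump_eq_0_iff)

lemma sum_lessThan_single:
  assumes "k0 < (K::nat)" "\<And>k. k < K \<Longrightarrow> k \<noteq> k0 \<Longrightarrow> f k = 0"
  shows "(\<Sum>k<K. f k) = f k0"
proof -
  have "(\<Sum>k<K. f k) = (\<Sum>k\<in>{k0}. f k)"
    by (rule sum.mono_neutral_right) (use assms in auto)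
  then show ?thesis
    by simp
qed

text \<open>Slot \<open>k\<close> is the time interval \<open>[k/K, (k+1)/K]\<close>; \<open>up_bump\<close> lives on its first half and
  \<open>down_bump\<close> on its second. An up-bump has integral \<open>1/(12 K)\<close>, so the factor \<open>12 K\<close> below makes the
  output gain exactly \<open>a k\<close> in an active slot.\<close>

definition pivot :: "nat \<Rightarrow> (nat \<Rightarrow> real vec \<Rightarrow> real) \<Rightarrow> real vec \<Rightarrow> real \<Rightarrow> real" where
  "pivot K G x s = (\<Sum>k<K. min (max (G k x) 0) (up_bump K k s + down_bump K k s))"

definition coupling :: "nat \<Rightarrow> (nat \<Rightarrow> real vec \<Rightarrow> real) \<Rightarrow> real vec \<Rightarrow> real \<Rightarrow> real" where
  "coupling K G x s = (\<Sum>k<K. min (max (G k x) 0) (up_bump K k s))"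

definition drive :: "nat \<Rightarrow> (nat \<Rightarrow> real) \<Rightarrow> real \<Rightarrow> real" where
  "drive K a s = (\<Sum>k<K. 12 * real K * a k * (up_bump K k s - down_bump K k s))"

definition register_velocity ::
    "nat \<Rightarrow> (nat \<Rightarrow> real) \<Rightarrow> (nat \<Rightarrow> real vec \<Rightarrow> real) \<Rightarrow> real vec \<Rightarrow> real \<Rightarrow> real"
where
  "register_velocity K a G x s =
     (\<Sum>k<K. if G k x > 0 then 12 * real K * a k * (up_bump K k s - down_bump K k s) else 0)"

definition output_velocity ::
    "nat \<Rightarrow> (nat \<Rightarrow> real) \<Rightarrow> (nat \<Rightarrow> real vec \<Rightarrow> real) \<Rightarrow> real vec \<Rightarrow> real \<Rightarrow> real"
where
  "output_velocity K a G x s = (\<Sum>k<K. if G k x > 0 then 12 * real K * a k * up_bump K k s else 0)"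

definition velocity_bound :: "nat \<Rightarrow> (nat \<Rightarrow> real) \<Rightarrow> real" where
  "velocity_bound K a = 3 * real K * (\<Sum>k<K. \<bar>a k\<bar>)"

lemma slot_velocity_bound:
  assumes "k < K" "0 \<le> u" "u \<le> 1/4" "0 \<le> d" "d \<le> 1/4"
  shows "\<bar>12 * real K * a k * (u - d)\<bar> \<le> velocity_bound K a"
proof -
  have "\<bar>12 * real K * a k * (u - d)\<bar> = 12 * real K * \<bar>a k\<bar> * \<bar>u - d\<bar>"
    by (simp add: abs_mult)
  also have "\<dots> \<le> 12 * real K * \<bar>a k\<bar> * (1/4)"
  proof (intro mult_left_mono)
    show "\<bar>u - d\<bar> \<le> 1/4"
      using assms(2-5) unfolding abs_le_iff by linarith
  qed simp
  also have "\<dots> \<le> 3 * real K * (\<Sum>k<K. \<bar>a k\<bar>)"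
    using assms(1) member_le_sum[of k "{..<K}" "\<lambda>k. \<bar>a k\<bar>"] by (simp add: mult_left_mono)
  finally show ?thesis
    unfolding velocity_bound_def .
qed

lemma slot_quantities_at_active_slot:
  assumes "k0 < K" "up_bump K k0 s + down_bump K k0 s > 0"
  shows "pivot K G x s = min (max (G k0 x) 0) (up_bump K k0 s + down_bump K k0 s)"
    and "coupling K G x s = min (max (G k0 x) 0) (up_bump K k0 s)"
    and "drive K a s = 12 * real K * a k0 * (up_bump K k0 s - down_bump K k0 s)"
    and "register_velocity K a G x s =
           (if G k0 x > 0 then 12 * real K * a k0 * (up_bump K k0 s - down_bump K k0 s) else 0)"
    and "output_velocity K a G x s = (if G k0 x > 0 then 12 * real K * a k0 * up_bump K k0 s else 0)"
proof -
  have quiet: "up_bump K k s = 0 \<and> down_bump K k s = 0" if "k < K" "k \<noteq> k0" for k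
    using slots_disjoint[OF _ assms(2), of k] that bump_nonneg unfolding up_bump_def down_bump_def
    by (smt (verit))
  show "pivot K G x s = min (max (G k0 x) 0) (up_bump K k0 s + down_bump K k0 s)"
    unfolding pivot_def by (rule sum_lessThan_single[OF assms(1)]) (simp add: quiet)
  show "coupling K G x s = min (max (G k0 x) 0) (up_bump K k0 s)"
    unfolding coupling_def by (rule sum_lessThan_single[OF assms(1)]) (simp add: quiet)
  show "drive K a s = 12 * real K * a k0 * (up_bump K k0 s - down_bump K k0 s)"
    unfolding drive_def by (rule sum_lessThan_single[OF assms(1)]) (simp add: quiet)
  show "register_velocity K a G x s =
      (if G k0 x > 0 then 12 * real K * a k0 * (up_bump K k0 s - down_bump K k0 s) else 0)"
    unfolding register_velocity_def by (rule sum_lessThan_single[OF assms(1)]) (simp add: quiet)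
  show "output_velocity K a G x s = (if G k0 x > 0 then 12 * real K * a k0 * up_bump K k0 s else 0)"
    unfolding output_velocity_def by (rule sum_lessThan_single[OF assms(1)]) (simp add: quiet)
qed

lemma slot_field_cases:
  "(pivot K G x s = 0 \<and> register_velocity K a G x s = 0 \<and> output_velocity K a G x s = 0) \<or>
   (pivot K G x s \<noteq> 0 \<and> register_velocity K a G x s = drive K a s \<and>
    output_velocity K a G x s = coupling K G x s * drive K a s / pivot K G x s \<and>
    \<bar>register_velocity K a G x s\<bar> \<le> velocity_bound K a \<and>
    \<bar>output_velocity K a G x s\<bar> \<le> velocity_bound K a)"
proof (cases "\<exists>k0<K. up_bump K k0 s + down_bump K k0 s > 0")
  case False
  then have "up_bump K k s = 0 \<and> down_bump K k s = 0" if "k < K" for k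
    using that bump_nonneg unfolding up_bump_def down_bump_def by (smt (verit))
  then have "pivot K G x s = 0" "register_velocity K a G x s = 0" "output_velocity K a G x s = 0"
    unfolding pivot_def register_velocity_def output_velocity_def by (auto intro!: sum.neutral)
  then show ?thesis
    by simp
next
  case True
  then obtain k0 where k0: "k0 < K" "up_bump K k0 s + down_bump K k0 s > 0"
    by blast
  let ?g = "max (G k0 x) 0" and ?u = "up_bump K k0 s" and ?d = "down_bump K k0 s"
    and ?\<kappa> = "12 * real K * a k0"
  note at_k0 = slot_quantities_at_active_slot[OF k0]
  have ud: "0 \<le> ?u" "?u \<le> 1/4" "0 \<le> ?d" "?d \<le> 1/4"
    unfolding up_bump_def down_bump_def by (simp_all only: bump_nonneg bump_le_quarter)
  show ?thesis
  proof (cases "G k0 x > 0")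
    case False
    then show ?thesis
      using ud by (simp add: at_k0)
  next
    case True
    have "min ?g (?u + ?d) \<noteq> 0"
      using True k0(2) by simp
    moreover have "?\<kappa> * ?u = min ?g ?u * (?\<kappa> * (?u - ?d)) / min ?g (?u + ?d)"
    proof (cases "?u > 0")
      case True
      then have "?d = 0"
        by (rule up_bump_pos_imp_down_bump_zero)
      then show ?thesis
        using True \<open>G k0 x > 0\<close> by simp
    next
      case False
      then show ?thesis
        using ud by simp
    qed
    moreover have "\<bar>?\<kappa> * (?u - ?d)\<bar> \<le> velocity_bound K a"
      by (rule slot_velocity_bound[OF k0(1) ud])
    moreover have "\<bar>?\<kappa> * ?u\<bar> \<le> velocity_bound K a"
      using slot_velocity_bound[OF k0(1) ud(1,2), of 0 a] by simp
    ultimately show ?thesis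
      using True by (simp add: at_k0)
  qed
qed

definition lower_tri_mat2 :: "real \<Rightarrow> real \<Rightarrow> real mat" where
  "lower_tri_mat2 q p = mat 2 2 (\<lambda>(i, j). if i = 0 then of_bool (j = 0) else if j = 0 then - q else p)"

lemma lower_tri_mat2_dim [simp]: "dim_row (lower_tri_mat2 q p) = 2" "dim_col (lower_tri_mat2 q p) = 2"
  by (simp_all add: lower_tri_mat2_def)

lemma lower_tri_mat2_mult_vec:
  assumes "v \<in> carrier_vec 2"
  shows "lower_tri_mat2 q p *\<^sub>v v = vec 2 (\<lambda>i. if i = 0 then v $ 0 else - q * v $ 0 + p * v $ 1)"
  using assms by (intro eq_vecI) (auto simp: lower_tri_mat2_def scalar_prod_def numeral_2_eq_2)

lemma lower_tri_mat2_singular: "\<not> invertible_mat (lower_tri_mat2 q 0)"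
proof
  assume "invertible_mat (lower_tri_mat2 q 0)"
  then obtain B where BM: "B * lower_tri_mat2 q 0 = 1\<^sub>m (dim_row B)"
    unfolding invertible_mat_def inverts_mat_def by (auto simp: lower_tri_mat2_def)
  have "dim_row B = 2"
    using arg_cong[OF BM, of dim_col] by (simp add: lower_tri_mat2_def)
  then have "(B * lower_tri_mat2 q 0) $$ (1, 1) = 1"
    using BM by simp
  moreover have "(B * lower_tri_mat2 q 0) $$ (1, 1) = 0"
    using \<open>dim_row B = 2\<close> by (simp add: lower_tri_mat2_def scalar_prod_def)
  ultimately show False
    by simp
qed

lemma lower_tri_mat2_invertible:
  assumes "p \<noteq> 0"
  shows "invertible_mat (lower_tri_mat2 q p)"
proof -
  define B where "B = mat 2 2 (\<lambda>(i, j). if i = 0 then of_bool (j = 0) else if j = 0 then q / p else 1 / p)"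
  have "lower_tri_mat2 q p * B = 1\<^sub>m 2" "B * lower_tri_mat2 q p = 1\<^sub>m 2"
    using assms by (auto intro!: eq_matI simp: lower_tri_mat2_def B_def scalar_prod_def numeral_2_eq_2 less_Suc_eq field_simps)
  then show ?thesis
    unfolding invertible_mat_def inverts_mat_def by (auto simp: lower_tri_mat2_def B_def)
qed

lemma clamp_sol_lower_tri_mat2:
  "clamp_sol c (lower_tri_mat2 q p) (vec 2 (\<lambda>i. if i = 0 then \<phi> else 0)) =
     (if p = 0 then 0\<^sub>v 2 else vec 2 (\<lambda>i. clamp c (if i = 0 then \<phi> else q * \<phi> / p)))"
proof (cases "p = 0")
  case True
  then show ?thesis
    using lower_tri_mat2_singular by (simp add: clamp_sol_def)
next
  case False
  let ?b = "vec 2 (\<lambda>i. if i = 0 then \<phi> else 0)"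
  have "(THE v. v \<in> carrier_vec (dim_col (lower_tri_mat2 q p)) \<and> lower_tri_mat2 q p *\<^sub>v v = ?b)
      = vec 2 (\<lambda>i. if i = 0 then \<phi> else q * \<phi> / p)"
  proof (rule the_equality)
    fix v
    assume v: "v \<in> carrier_vec (dim_col (lower_tri_mat2 q p)) \<and> lower_tri_mat2 q p *\<^sub>v v = ?b"
    then have v2: "v \<in> carrier_vec 2"
      by (simp add: lower_tri_mat2_def)
    with v have rows: "vec 2 (\<lambda>i. if i = 0 then v $ 0 else - q * v $ 0 + p * v $ 1) = ?b"
      by (simp add: lower_tri_mat2_mult_vec)
    have "v $ 0 = \<phi>" "- q * v $ 0 + p * v $ 1 = 0"
      using arg_cong[OF rows, of "\<lambda>w. w $ 0"] arg_cong[OF rows, of "\<lambda>w. w $ 1"] by simp_all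
    then show "v = vec 2 (\<lambda>i. if i = 0 then \<phi> else q * \<phi> / p)"
      using False v2 by (intro eq_vecI) (auto simp: field_simps less_2_cases_iff)
  qed (use False in \<open>auto intro!: eq_vecI simp: lower_tri_mat2_mult_vec field_simps\<close>)
  then show ?thesis
    using False lower_tri_mat2_invertible[OF False] by (auto intro!: eq_vecI simp: clamp_sol_def)
qed

definition slot_net :: "nat \<Rightarrow> (nat \<Rightarrow> real) \<Rightarrow> (nat \<Rightarrow> real vec \<Rightarrow> real) \<Rightarrow> isdnet" where
  "slot_net K a G =
     ((\<lambda>i j (x, z, s). if i = 0 then of_bool (j = 0) else if j = 0 then - coupling K G x s else pivot K G x s),
      (\<lambda>i (x, z, s). if i = 0 then drive K a s else 0))"

lemma net_M_slot_net: "net_M 1 (slot_net K a G) x z s = lower_tri_mat2 (coupling K G x s) (pivot K G x s)"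
  unfolding net_M_def slot_net_def lower_tri_mat2_def one_add_one by simp

lemma net_b_slot_net: "net_b 1 (slot_net K a G) x z s = vec 2 (\<lambda>i. if i = 0 then drive K a s else 0)"
  unfolding net_b_def slot_net_def one_add_one by simp

lemma net_time_poly: "(\<lambda>w::net_input. snd (snd w)) \<in> polys_on (net_vars m n)"
proof -
  have "(\<lambda>(x::real vec, z::real vec, s::real). s) \<in> polys_on (net_vars m n)"
    by (rule polys_on.var) (simp add: net_vars_def)
  then show ?thesis
    by (simp add: case_prod_beta')
qed

lemma ISD_on_net_input:
  assumes "F \<in> ISD m"
  shows "(\<lambda>w::net_input. F (fst w)) \<in> ISD_on (net_vars m n)"
proof (rule ISD_on_compose[where \<pi> = fst])
  show "F \<in> ISD_on {(\<lambda>x. x $ i) | i. i < m}"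
    using assms by (simp add: ISD_def)
  fix v :: "real vec \<Rightarrow> real"
  assume "v \<in> {(\<lambda>x. x $ i) | i. i < m}"
  then obtain i where "i < m" "v = (\<lambda>x. x $ i)"
    by blast
  then have "(\<lambda>(x::real vec, z::real vec, s::real). v x) \<in> polys_on (net_vars m n)"
    by (intro polys_on.var) (auto simp: net_vars_def)
  then show "(\<lambda>w. v (fst w)) \<in> polys_on (net_vars m n)"
    by (simp add: case_prod_beta')
qed

lemma ISD_on_net_bump:
  "(\<lambda>w::net_input. bump (2 * real K * snd (snd w) - \<beta>)) \<in> ISD_on (net_vars m n)"
  by (intro ISD_on_bump polys_on_diff polys_on.mult polys_on.const net_time_poly)

lemma is_ISDnet_slot_net:
  assumes "\<And>k. k < K \<Longrightarrow> G k \<in> ISD m"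
  shows "is_ISDnet m 1 (slot_net K a G)"
proof -
  have gate: "(\<lambda>w::net_input. max (G k (fst w)) 0) \<in> ISD_on (net_vars m 1)" if "k < K" for k
    using that assms by (intro ISD_on.max ISD_on_net_input ISD_on_const)
  have up: "(\<lambda>w::net_input. up_bump K k (snd (snd w))) \<in> ISD_on (net_vars m 1)"
    and down: "(\<lambda>w::net_input. down_bump K k (snd (snd w))) \<in> ISD_on (net_vars m 1)" for k
    unfolding up_bump_def down_bump_def by (rule ISD_on_net_bump)+
  have "(\<lambda>w::net_input. pivot K G (fst w) (snd (snd w))) \<in> ISD_on (net_vars m 1)"
    unfolding pivot_def by (intro ISD_on_sum ISD_on.min ISD_on_add gate up down)
  moreover have "(\<lambda>w::net_input. - coupling K G (fst w) (snd (snd w))) \<in> ISD_on (net_vars m 1)"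
    unfolding coupling_def by (intro ISD_on_uminus ISD_on_sum ISD_on.min gate up)
  moreover have "(\<lambda>w::net_input. drive K a (snd (snd w))) \<in> ISD_on (net_vars m 1)"
    unfolding drive_def by (intro ISD_on_sum ISD_on_cmult ISD_on_diff up down)
  ultimately show ?thesis
    unfolding is_ISDnet_def slot_net_def by (auto simp: case_prod_beta' less_Suc_eq ISD_on_const)
qed

lemma clamp_eq_self: "\<bar>u\<bar> \<le> c \<Longrightarrow> clamp c u = u"
  by (simp add: clamp_def abs_le_iff)

lemma clamp_sol_slot_net:
  assumes "velocity_bound K a \<le> c"
  shows "clamp_sol c (net_M 1 (slot_net K a G) x z s) (net_b 1 (slot_net K a G) x z s) =
           vec 2 (\<lambda>i. if i = 0 then register_velocity K a G x s else output_velocity K a G x s)"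
proof (cases "pivot K G x s = 0")
  case True
  then show ?thesis
    unfolding net_M_slot_net net_b_slot_net clamp_sol_lower_tri_mat2
    using slot_field_cases[of K G x s a] by (auto intro!: eq_vecI)
next
  case False
  then have "register_velocity K a G x s = drive K a s"
    "output_velocity K a G x s = coupling K G x s * drive K a s / pivot K G x s"
    "\<bar>register_velocity K a G x s\<bar> \<le> c" "\<bar>output_velocity K a G x s\<bar> \<le> c"
    using slot_field_cases[of K G x s a] assms by auto
  with False show ?thesis
    unfolding net_M_slot_net net_b_slot_net clamp_sol_lower_tri_mat2
    by (auto intro!: eq_vecI simp: clamp_eq_self)
qed

section \<open>Explicit solution of the network ODE\<close>

definition register_path ::
    "nat \<Rightarrow> (nat \<Rightarrow> real) \<Rightarrow> (nat \<Rightarrow> real vec \<Rightarrow> real) \<Rightarrow> real vec \<Rightarrow> real \<Rightarrow> real"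
where
  "register_path K a G x s =
     (\<Sum>k<K. if G k x > 0 then 6 * a k * (bump_primitive (2 * real K * s - 2 * real k)
                                         - bump_primitive (2 * real K * s - (2 * real k + 1))) else 0)"

definition output_path ::
    "nat \<Rightarrow> (nat \<Rightarrow> real) \<Rightarrow> (nat \<Rightarrow> real vec \<Rightarrow> real) \<Rightarrow> real vec \<Rightarrow> real \<Rightarrow> real"
where
  "output_path K a G x s =
     (\<Sum>k<K. if G k x > 0 then 6 * a k * bump_primitive (2 * real K * s - 2 * real k) else 0)"

lemma bump_primitive_affine_has_real_derivative:
  "((\<lambda>s. bump_primitive (\<alpha> * s - \<beta>)) has_real_derivative bump (\<alpha> * s - \<beta>) * \<alpha>) (at s)"
proof (rule DERIV_chain2[OF bump_primitive_has_real_derivative])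
  show "((\<lambda>s. \<alpha> * s - \<beta>) has_real_derivative \<alpha>) (at s)"
    by (auto intro!: derivative_eq_intros)
qed

lemma register_path_has_real_derivative:
  "(register_path K a G x has_real_derivative register_velocity K a G x s) (at s)"
  unfolding register_path_def[abs_def] register_velocity_def up_bump_def down_bump_def
proof (rule DERIV_sum)
  fix k
  have "((\<lambda>s. 6 * a k * (bump_primitive (2 * real K * s - 2 * real k)
                           - bump_primitive (2 * real K * s - (2 * real k + 1))))
        has_real_derivative 6 * a k * (bump (2 * real K * s - 2 * real k) * (2 * real K)
                           - bump (2 * real K * s - (2 * real k + 1)) * (2 * real K))) (at s)"
    by (intro DERIV_cmult DERIV_diff bump_primitive_affine_has_real_derivative)
  then show "((\<lambda>s. if G k x > 0 then 6 * a k * (bump_primitive (2 * real K * s - 2 * real k)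
                           - bump_primitive (2 * real K * s - (2 * real k + 1))) else 0)
        has_real_derivative (if G k x > 0 then 12 * real K * a k * (bump (2 * real K * s - 2 * real k)
                           - bump (2 * real K * s - (2 * real k + 1))) else 0)) (at s)"
    by (simp add: algebra_simps)
qed

lemma output_path_has_real_derivative:
  "(output_path K a G x has_real_derivative output_velocity K a G x s) (at s)"
  unfolding output_path_def[abs_def] output_velocity_def up_bump_def
proof (rule DERIV_sum)
  fix k
  have "((\<lambda>s. 6 * a k * bump_primitive (2 * real K * s - 2 * real k))
        has_real_derivative 6 * a k * (bump (2 * real K * s - 2 * real k) * (2 * real K))) (at s)"
    by (intro DERIV_cmult bump_primitive_affine_has_real_derivative)
  then show "((\<lambda>s. if G k x > 0 then 6 * a k * bump_primitive (2 * real K * s - 2 * real k) else 0)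
        has_real_derivative (if G k x > 0 then 12 * real K * a k * bump (2 * real K * s - 2 * real k) else 0)) (at s)"
    by (simp add: algebra_simps)
qed

lemma register_path_0: "register_path K a G x 0 = 0"
  unfolding register_path_def by (intro sum.neutral) (simp add: bump_primitive_nonpos)

lemma output_path_0: "output_path K a G x 0 = 0"
  unfolding output_path_def by (intro sum.neutral) (simp add: bump_primitive_nonpos)

lemma register_path_1: "register_path K a G x 1 = 0"
  and output_path_1: "output_path K a G x 1 = (\<Sum>k<K. if G k x > 0 then a k else 0)"
proof -
  have "bump_primitive (2 * real K - 2 * real k) = 1/6" "bump_primitive (2 * real K - (2 * real k + 1)) = 1/6"
    if "k < K" for k
    using that by (simp_all add: bump_primitive_ge_one of_nat_less_iff[symmetric])
  note ends = this
  show "register_path K a G x 1 = 0"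
    unfolding register_path_def by (intro sum.neutral) (simp add: ends)
  show "output_path K a G x 1 = (\<Sum>k<K. if G k x > 0 then a k else 0)"
    unfolding output_path_def by (intro sum.cong) (simp_all add: ends)
qed

lemma has_real_derivative_zero_Icc_imp_eq:
  fixes f :: "real \<Rightarrow> real"
  assumes "a \<le> b" "\<And>s. s \<in> {a..b} \<Longrightarrow> (f has_real_derivative 0) (at s within {a..b})"
  shows "f b = f a"
proof (cases "a = b")
  case False
  have "continuous_on {a..b} f"
    using assms(2) DERIV_continuous continuous_on_eq_continuous_within by blast
  moreover have "(f has_real_derivative 0) (at s)" if "a < s" "s < b" for s
    using assms(2)[of s] that at_within_Icc_at[OF that] by simp
  ultimately show ?thesis
    using DERIV_isconst_end[of a b f] assms(1) False by simp
qed simp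

lemma ode_solution_state_independent:
  assumes "s0 \<le> s1" "z0 \<in> carrier_vec (n + 1)"
    and field: "\<And>z s. s \<in> {s0..s1} \<Longrightarrow>
                  clamp_sol c (net_M n N x z s) (net_b n N x z s) = vec (n + 1) (\<lambda>i. v i s)"
    and primitive: "\<And>i s. i < n + 1 \<Longrightarrow> (p i has_real_derivative v i s) (at s)"
    and initial: "\<And>i. i < n + 1 \<Longrightarrow> p i s0 = z0 $ i"
  shows "\<exists>sol. ode_solution n N c x z0 s0 s1 sol"
    and "ode_solution n N c x z0 s0 s1 sol \<Longrightarrow> sol s1 = vec (n + 1) (\<lambda>i. p i s1)"
proof -
  define sol0 where "sol0 s = vec (n + 1) (\<lambda>i. p i s)" for s
  have "(\<lambda>r. sol0 r $ i) = p i" if "i < n + 1" for i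
    using that by (simp add: sol0_def fun_eq_iff)
  then have "((\<lambda>r. sol0 r $ i) has_real_derivative
      clamp_sol c (net_M n N x (sol0 s) s) (net_b n N x (sol0 s) s) $ i) (at s within {s0..s1})"
    if "s \<in> {s0..s1}" "i < n + 1" for s i
    using that by (simp add: field has_field_derivative_at_within primitive)
  moreover have "sol0 s0 = z0"
    using assms(2) initial by (intro eq_vecI) (simp_all add: sol0_def)
  ultimately have "ode_solution n N c x z0 s0 s1 sol0"
    unfolding ode_solution_def by (simp add: sol0_def)
  then show "\<exists>sol. ode_solution n N c x z0 s0 s1 sol"
    by blast
next
  assume sol: "ode_solution n N c x z0 s0 s1 sol"
  have "sol s1 $ i = p i s1" if i: "i < n + 1" for i
  proof -
    have "((\<lambda>r. sol r $ i - p i r) has_real_derivative v i s - v i s) (at s within {s0..s1})"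
      if "s \<in> {s0..s1}" for s
    proof (rule DERIV_diff)
      show "((\<lambda>r. sol r $ i) has_real_derivative v i s) (at s within {s0..s1})"
        using sol that i unfolding ode_solution_def by (simp add: field)
    qed (rule has_field_derivative_at_within[OF primitive[OF i]])
    then have "sol s1 $ i - p i s1 = sol s0 $ i - p i s0"
      using has_real_derivative_zero_Icc_imp_eq[OF assms(1), of "\<lambda>r. sol r $ i - p i r"] by simp
    then show ?thesis
      using sol initial i by (simp add: ode_solution_def)
  qed
  moreover have "sol s1 \<in> carrier_vec (n + 1)"
    using sol assms(1) by (simp add: ode_solution_def)
  ultimately show "sol s1 = vec (n + 1) (\<lambda>i. p i s1)"
    by (intro eq_vecI) auto
qed

lemma slot_net_ode_solution:
  assumes "velocity_bound K a \<le> c"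
  shows "\<exists>sol. ode_solution 1 (slot_net K a G) c x (0\<^sub>v (1 + 1)) 0 1 sol"
    and "ode_solution 1 (slot_net K a G) c x (0\<^sub>v (1 + 1)) 0 1 sol \<Longrightarrow>
           sol 1 = vec (1 + 1) (\<lambda>i. if i = 1 then (\<Sum>k<K. if G k x > 0 then a k else 0) else 0)"
proof -
  define v p where "v i s = (if i = 0 then register_velocity K a G x s else output_velocity K a G x s)"
    and "p i = (if i = 0 then register_path K a G x else output_path K a G x)" for i :: nat and s
  have field: "clamp_sol c (net_M 1 (slot_net K a G) x z s) (net_b 1 (slot_net K a G) x z s)
      = vec (1 + 1) (\<lambda>i. v i s)" for z s
    using clamp_sol_slot_net[OF assms] by (simp add: v_def numeral_2_eq_2)
  have primitive: "(p i has_real_derivative v i s) (at s)" for i s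
    by (simp add: p_def v_def register_path_has_real_derivative output_path_has_real_derivative)
  have initial: "p i 0 = 0\<^sub>v (1 + 1) $ i" if "i < 1 + 1" for i
    using that by (simp add: p_def register_path_0 output_path_0)
  have final: "vec (1 + 1) (\<lambda>i. p i 1) = vec (1 + 1) (\<lambda>i. if i = 1 then (\<Sum>k<K. if G k x > 0 then a k else 0) else 0)"
    by (intro eq_vecI) (auto simp: p_def register_path_1 output_path_1)
  note ode = ode_solution_state_independent[of 0 1 "0\<^sub>v (1 + 1)" 1 c "slot_net K a G" x v p]
  show "\<exists>sol. ode_solution 1 (slot_net K a G) c x (0\<^sub>v (1 + 1)) 0 1 sol"
    using ode(1) field primitive initial by auto
  show "sol 1 = vec (1 + 1) (\<lambda>i. if i = 1 then (\<Sum>k<K. if G k x > 0 then a k else 0) else 0)"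
    if "ode_solution 1 (slot_net K a G) c x (0\<^sub>v (1 + 1)) 0 1 sol"
    using ode(2)[of sol] field primitive initial final that by auto
qed

theorem mainTheorem13:
  fixes m :: nat and S :: "real vec set"
  assumes "semialgebraic m S"
  shows "\<exists>(n::nat) (N::isdnet) (C::nat). is_ISDnet m n N \<and>
           (\<forall>c::real. c \<ge> real C \<longrightarrow>
              (\<forall>x \<in> carrier_vec m.
                 (\<exists>sol. ode_solution n N c x (0\<^sub>v (n + 1)) 0 1 sol) \<and>
                 (\<forall>sol. ode_solution n N c x (0\<^sub>v (n + 1)) 0 1 sol \<longrightarrow>
                    sol 1 = vec (n + 1) (\<lambda>i. if i = n then (if x \<in> S then 1 else 0) else 0))))"
proof -
  obtain f where "f \<in> ISD_step_sums m" and indicator: "\<And>x. x \<in> carrier_vec m \<Longrightarrow> of_bool (x \<in> S) = f x"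
    using semialgebraic_indicator_ISD_step_sum[OF assms] by blast
  then obtain cs where cs: "snd ` set cs \<subseteq> ISD m" and f: "f = step_sum cs"
    unfolding ISD_step_sums_def by blast
  define K a G where "K = length cs" and "a = (\<lambda>k. fst (cs ! k))" and "G = (\<lambda>k. snd (cs ! k))"
  have "G k \<in> ISD m" if "k < K" for k
    using cs that by (auto simp: K_def G_def)
  then have net: "is_ISDnet m 1 (slot_net K a G)"
    by (rule is_ISDnet_slot_net)
  have bound: "velocity_bound K a \<le> c" if "real (nat \<lceil>velocity_bound K a\<rceil>) \<le> c" for c
    using that real_nat_ceiling_ge[of "velocity_bound K a"] by linarith
  have steps: "(\<Sum>k<K. if G k x > 0 then a k else 0) = (if x \<in> S then 1 else 0)"
    if "x \<in> carrier_vec m" for x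
    using indicator[OF that] unfolding f step_sum_conv_sum K_def a_def G_def of_bool_def by (rule sym)
  show ?thesis
  proof (rule exI[of _ 1], rule exI[of _ "slot_net K a G"], rule exI[of _ "nat \<lceil>velocity_bound K a\<rceil>"],
         intro conjI allI impI ballI)
    fix c sol and x :: "real vec"
    assume c: "real (nat \<lceil>velocity_bound K a\<rceil>) \<le> c" and x: "x \<in> carrier_vec m"
    show "\<exists>sol. ode_solution 1 (slot_net K a G) c x (0\<^sub>v (1 + 1)) 0 1 sol"
      by (rule slot_net_ode_solution(1)[OF bound[OF c]])
    show "sol 1 = vec (1 + 1) (\<lambda>i. if i = 1 then (if x \<in> S then 1 else 0) else 0)"
      if "ode_solution 1 (slot_net K a G) c x (0\<^sub>v (1 + 1)) 0 1 sol"
      using slot_net_ode_solution(2)[OF bound[OF c] that] unfolding steps[OF x] .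
  qed (rule net)
qed

end
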